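(* Let $\kappa:\mathbb{R}^d\times\mathbb{R}^d\to\mathbb{R}$ be a kernel with reproducing kernel Hilbert space $\mathcal{H}_\kappa$, and assume $\kappa(\mathbf{x},\mathbf{x})=1$ for all $\mathbf{x}$. Let $(\mathbf{x}_1,y_1),\ldots,(\mathbf{x}_T,y_T)$ be a sequence of examples with $\mathbf{x}_t\in\mathbb{R}^d$ and $y_t\in\{-1,+1\}$, and let $\ell_t(f)=\max(0,1-y_tf(\mathbf{x}_t))$ be the hinge loss, assumed $1$-Lipschitz with respect to $\|\cdot\|_{\mathcal{H}_\kappa}$. Let $f_*\in\arg\min_{f\in\mathcal{H}_\kappa}\sum_{t=1}^T\ell_t(f)$. Let $\beta\ge\alpha>0$ and $\eta>0$, and let $f_1,\ldots,f_T$ be generated by the SPA (Sparse Passive Aggressive) update described in the context. Then $$\mathbb{E}\Big[\sum_{t=1}^T\big(\ell_t(f_t)-\ell_t(f_* )\big)\Big]<\frac{1}{2\eta}\|f_*\|^2_{\mathcal{H}_\kappa}+\frac{\eta\beta}{\min(\alpha,\sqrt{\beta\eta})}\,T .$$ Moreover, if $\eta=\|f_*\|_{\mathcal{H}_\kappa}\sqrt{\frac{\alpha}{2\beta T}}$ and $\alpha^3\le\frac{\beta}{2T}\|f_*\|^2_{\mathcal{H}_\kappa}$, then $$\mathbb{E}\Big[\sum_{t=1}^T\big(\ell_t(f_t)-\ell_t(f_* )\big)\Big]<\|f_*\|_{\mathcal{H}_\kappa}\sqrt{2\beta T/\alpha}.$$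
   Context: SPA update (single kernel): start with $f_1=0\in\mathcal{H}_\kappa$. At each round $t=1,\ldots,T$, compute $\rho_t=\min(\alpha,\ell_t(f_t))/\beta$ and draw a random variable $Z_t\in\{0,1\}$ with $\Pr(Z_t=1\mid Z_1,\ldots,Z_{t-1})=\rho_t$. Then set $$f_{t+1}=\arg\min_{f\in\mathcal{H}_\kappa}\ \frac12\|f-f_t\|^2_{\mathcal{H}_\kappa}+\frac{Z_t}{\rho_t}\,\eta\,\ell_t(f),$$ with the convention $Z_t/\rho_t=0$ when $\rho_t=0$. Equivalently, $f_{t+1}=f_t+\tau_ty_t\kappa(\mathbf{x}_t,\cdot)$ with $\tau_t=\min\big(\eta Z_t/\rho_t,\ \ell_t(f_t)/\kappa(\mathbf{x}_t,\mathbf{x}_t)\big)$. The expectation is over the random variables $Z_1,\ldots,Z_T$. *)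

theory Defs
  imports "HOL-Analysis.Analysis" "HOL-Probability.Probability"
begin

text \<open>RKHS modelled abstractly: a Hilbert space 'h together with the canonical feature map
  k x = kappa(x, .), so that f(x) = f \<bullet> k x (reproducing property).
  Rounds are 0-indexed: round t (t < T) uses example (kx t, y t), where kx t = k (x t).\<close>

definition hinge :: "'h::real_inner \<Rightarrow> real \<Rightarrow> 'h \<Rightarrow> real" where
  "hinge kxt yt f = max 0 (1 - yt * (f \<bullet> kxt))"

definition spa_rho :: "real \<Rightarrow> real \<Rightarrow> ('h::real_inner) \<Rightarrow> real \<Rightarrow> 'h \<Rightarrow> real" where
  "spa_rho \<alpha> \<beta> kxt yt f = min \<alpha> (hinge kxt yt f) / \<beta>"

text \<open>Step size tau_t = min(eta Z_t / rho_t, l_t(f_t) / kappa(x_t,x_t)), with Z_t/rho_t = 0 if rho_t = 0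
  (in HOL, eta / 0 = 0).\<close>
definition spa_tau :: "real \<Rightarrow> real \<Rightarrow> real \<Rightarrow> ('h::real_inner) \<Rightarrow> real \<Rightarrow> 'h \<Rightarrow> bool \<Rightarrow> real" where
  "spa_tau \<alpha> \<beta> \<eta> kxt yt f z =
     (if z then min (\<eta> / spa_rho \<alpha> \<beta> kxt yt f) (hinge kxt yt f / (kxt \<bullet> kxt)) else 0)"

text \<open>spa_f ... z n is the iterate f_{n+1} (so spa_f ... z 0 = f_1 = 0), driven by Z-values z 0, ..., z (n-1).\<close>
primrec spa_f :: "real \<Rightarrow> real \<Rightarrow> real \<Rightarrow> (nat \<Rightarrow> 'h::real_inner) \<Rightarrow> (nat \<Rightarrow> real) \<Rightarrow> (nat \<Rightarrow> bool) \<Rightarrow> nat \<Rightarrow> 'h" where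
  "spa_f \<alpha> \<beta> \<eta> kx y z 0 = 0"
| "spa_f \<alpha> \<beta> \<eta> kx y z (Suc n) =
     (let f = spa_f \<alpha> \<beta> \<eta> kx y z n
      in f + (spa_tau \<alpha> \<beta> \<eta> (kx n) (y n) f (z n) * y n) *\<^sub>R kx n)"

text \<open>Joint law of (Z_0, ..., Z_{n-1}) (other coordinates False): Z_n is Bernoulli(rho_n) given the past.\<close>
primrec spa_Z :: "real \<Rightarrow> real \<Rightarrow> real \<Rightarrow> (nat \<Rightarrow> 'h::real_inner) \<Rightarrow> (nat \<Rightarrow> real) \<Rightarrow> nat \<Rightarrow> (nat \<Rightarrow> bool) pmf" where
  "spa_Z \<alpha> \<beta> \<eta> kx y 0 = return_pmf (\<lambda>_. False)"
| "spa_Z \<alpha> \<beta> \<eta> kx y (Suc n) =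
     bind_pmf (spa_Z \<alpha> \<beta> \<eta> kx y n) (\<lambda>z.
       bind_pmf (bernoulli_pmf (spa_rho \<alpha> \<beta> (kx n) (y n) (spa_f \<alpha> \<beta> \<eta> kx y z n))) (\<lambda>b.
         return_pmf (z(n := b))))"

end

theory Submission
  imports Defs
begin

(* One SPA round is a passive-aggressive step of size min(eta/rho, l) taken with probability
   rho = min(alpha, l)/beta, so in expectation the potential ||f_t - f_star||^2/(2 eta) decreases by
   at least the excess loss l_t(f_t) - l_t(f_star) minus min(l, eta/(2 rho)).  That slack is at most
   sqrt(eta beta/2) when l <= alpha and eta beta/(2 alpha) otherwise.  Telescoping from f_1 = 0
   bounds the expected regret by ||f_star||^2/(2 eta) plus T times the slack, and the slack is below
   eta beta / min(alpha, sqrt(beta eta)).  The comparator enters only through ||f_star||. *)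

lemma pa_step_gain_le:
  fixes l ls \<rho> \<eta> \<tau> D D' :: real
  assumes "0 < l" "0 \<le> ls" "0 < \<rho>" "0 < \<eta>" "\<tau> = min (\<eta> / \<rho>) l"
    and "D' \<le> D - 2 * \<tau> * (l - ls) + \<tau>\<^sup>2"
  shows "l - ls \<le> \<rho> * (D - D') / (2 * \<eta>) + min l (\<eta> / (2 * \<rho>))"
proof -
  define w where "w = \<rho> * \<tau> / \<eta>"
  have w: "0 \<le> w" "w \<le> 1"
    using assms by (auto simp: w_def field_simps min_def)
  have "\<rho> * (D - D') / (2 * \<eta>) \<ge> \<rho> * (2 * \<tau> * (l - ls) - \<tau>\<^sup>2) / (2 * \<eta>)"
    using assms by (intro divide_right_mono mult_left_mono) auto
  also have "\<rho> * (2 * \<tau> * (l - ls) - \<tau>\<^sup>2) / (2 * \<eta>) = w * (l - ls) - w * \<tau> / 2"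
    using assms by (simp add: w_def field_simps power2_eq_square)
  finally have gain: "w * (l - ls) - w * \<tau> / 2 \<le> \<rho> * (D - D') / (2 * \<eta>)" .
  have "(1 - w) * (l - ls) \<le> (1 - w) * l"
    using w assms by (intro mult_left_mono) auto
  moreover have "l - ls = (w * (l - ls) - w * \<tau> / 2) + (1 - w) * (l - ls) + w * \<tau> / 2"
    by (simp add: algebra_simps)
  moreover have "(1 - w) * l + w * \<tau> / 2 \<le> min l (\<eta> / (2 * \<rho>))"
  proof (cases "\<eta> / \<rho> \<le> l")
    case True
    then have "w = 1" "\<tau> = \<eta> / \<rho>" using assms by (auto simp: w_def)
    then show ?thesis using True assms by (simp add: field_simps)
  next
    case False
    then have \<tau>: "\<tau> = l" using assms by simp
    have "0 \<le> (\<rho> * l - \<eta>)\<^sup>2 / (2 * \<rho> * \<eta>)" using assms by simp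
    then have "(1 - w) * l + w * \<tau> / 2 \<le> \<eta> / (2 * \<rho>)"
      using assms by (simp add: \<tau> w_def field_simps power2_eq_square)
    moreover have "(1 - w) * l + w * \<tau> / 2 \<le> l" using w \<tau> assms by (simp add: algebra_simps)
    ultimately show ?thesis by simp
  qed
  ultimately show ?thesis using gain by linarith
qed

lemma norm_pa_update_le:
  fixes kv f fs :: "'h::real_inner"
  assumes kv: "kv \<bullet> kv = 1" and yv: "yv \<in> {-1, 1}" and "0 \<le> \<tau>" and "0 < hinge kv yv f"
  shows "(norm (f + (\<tau> * yv) *\<^sub>R kv - fs))\<^sup>2
           \<le> (norm (f - fs))\<^sup>2 - 2 * \<tau> * (hinge kv yv f - hinge kv yv fs) + \<tau>\<^sup>2"
proof -
  have margin: "yv * ((f - fs) \<bullet> kv) \<le> hinge kv yv fs - hinge kv yv f"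
    using \<open>0 < hinge kv yv f\<close> by (simp add: hinge_def max_def inner_diff_left algebra_simps split: if_splits)
  have "(norm (f + (\<tau> * yv) *\<^sub>R kv - fs))\<^sup>2 = (norm ((f - fs) + (\<tau> * yv) *\<^sub>R kv))\<^sup>2"
    by (simp add: algebra_simps)
  also have "\<dots> = (norm (f - fs))\<^sup>2 + 2 * \<tau> * (yv * ((f - fs) \<bullet> kv)) + \<tau>\<^sup>2 * (yv * yv) * (kv \<bullet> kv)"
    unfolding power2_norm_eq_inner by (simp add: inner_add_left inner_add_right power2_eq_square
        algebra_simps inner_commute)
  also have "\<dots> = (norm (f - fs))\<^sup>2 + 2 * \<tau> * (yv * ((f - fs) \<bullet> kv)) + \<tau>\<^sup>2"
    using kv yv by auto
  finally show ?thesis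
    using mult_left_mono[OF margin, of "2 * \<tau>"] \<open>0 \<le> \<tau>\<close> by (simp add: algebra_simps)
qed

lemma expectation_bind_pmf_le:
  fixes M :: "'a pmf" and N :: "'a \<Rightarrow> 'b pmf" and g :: "'b \<Rightarrow> real"
  assumes fin: "finite (set_pmf M)" "\<And>a. a \<in> set_pmf M \<Longrightarrow> finite (set_pmf (N a))"
    and le: "\<And>a. a \<in> set_pmf M \<Longrightarrow> measure_pmf.expectation (N a) g \<le> h a + c"
  shows "measure_pmf.expectation (bind_pmf M N) g \<le> measure_pmf.expectation M h + c"
proof -
  have "measure_pmf.expectation (bind_pmf M N) g
      = (\<Sum>a\<in>set_pmf M. pmf M a * measure_pmf.expectation (N a) g)"
    using pmf_expectation_bind[of "set_pmf M" N M g] fin by simp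
  also have "\<dots> \<le> (\<Sum>a\<in>set_pmf M. pmf M a * (h a + c))"
    by (intro sum_mono mult_left_mono le) simp_all
  also have "\<dots> = (\<Sum>a\<in>set_pmf M. pmf M a * h a) + c * (\<Sum>a\<in>set_pmf M. pmf M a)"
    by (simp add: algebra_simps sum.distrib sum_distrib_left)
  also have "\<dots> = measure_pmf.expectation M h + c"
    using fin(1) by (simp add: integral_measure_pmf[of "set_pmf M"] sum_pmf_eq_1 mult.commute)
  finally show ?thesis .
qed

definition spa_round_bound :: "real \<Rightarrow> real \<Rightarrow> real \<Rightarrow> real" where
  "spa_round_bound \<alpha> \<beta> \<eta> = max (sqrt (\<eta> * \<beta> / 2)) (\<eta> * \<beta> / (2 * \<alpha>))"

definition spa_regret ::
    "real \<Rightarrow> real \<Rightarrow> real \<Rightarrow> (nat \<Rightarrow> 'h::real_inner) \<Rightarrow> (nat \<Rightarrow> real) \<Rightarrow> 'h \<Rightarrow> nat \<Rightarrow> (nat \<Rightarrow> bool) \<Rightarrow> real"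
  where "spa_regret \<alpha> \<beta> \<eta> kx y fs n z =
    (\<Sum>t<n. hinge (kx t) (y t) (spa_f \<alpha> \<beta> \<eta> kx y z t) - hinge (kx t) (y t) fs)"

definition spa_potential ::
    "real \<Rightarrow> real \<Rightarrow> real \<Rightarrow> (nat \<Rightarrow> 'h::real_inner) \<Rightarrow> (nat \<Rightarrow> real) \<Rightarrow> 'h \<Rightarrow> nat \<Rightarrow> (nat \<Rightarrow> bool) \<Rightarrow> real"
  where "spa_potential \<alpha> \<beta> \<eta> kx y fs n z =
    spa_regret \<alpha> \<beta> \<eta> kx y fs n z + (norm (spa_f \<alpha> \<beta> \<eta> kx y z n - fs))\<^sup>2 / (2 * \<eta>)"

lemma min_loss_step_le_spa_round_bound:
  fixes l \<alpha> \<beta> \<eta> :: real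
  assumes "0 < l" "0 < \<alpha>" "\<alpha> \<le> \<beta>" "0 < \<eta>"
  shows "min l (\<eta> / (2 * (min \<alpha> l / \<beta>))) \<le> spa_round_bound \<alpha> \<beta> \<eta>"
proof (cases "l \<le> \<alpha>")
  case True
  define s where "s = sqrt (\<eta> * \<beta> / 2)"
  have s: "0 < s" "s\<^sup>2 = \<eta> * \<beta> / 2" using assms by (simp_all add: s_def)
  have "min l (s\<^sup>2 / l) \<le> s"
  proof (cases "l \<le> s")
    case False
    then have "s\<^sup>2 / l \<le> s" using s assms by (simp add: power2_eq_square field_simps)
    then show ?thesis by simp
  qed simp
  moreover have "\<eta> / (2 * (min \<alpha> l / \<beta>)) = s\<^sup>2 / l"
    using True assms s by (simp add: min_def field_simps)
  ultimately show ?thesis by (simp add: spa_round_bound_def s_def)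
next
  case False
  then have "\<eta> / (2 * (min \<alpha> l / \<beta>)) = \<eta> * \<beta> / (2 * \<alpha>)" using assms by (simp add: min_def)
  then show ?thesis unfolding spa_round_bound_def by (metis max.cobounded2 min.cobounded2 order_trans)
qed

lemma spa_rho_bounds:
  assumes "0 < \<alpha>" "\<alpha> \<le> \<beta>"
  shows "0 \<le> spa_rho \<alpha> \<beta> kv yv f" "spa_rho \<alpha> \<beta> kv yv f \<le> 1"
  using assms unfolding spa_rho_def hinge_def by (auto simp: min_def field_simps)

lemma spa_round_potential_le:
  fixes kv f fs :: "'h::real_inner"
  assumes kv: "kv \<bullet> kv = 1" and yv: "yv \<in> {-1, 1}" and "0 < \<alpha>" "\<alpha> \<le> \<beta>" "0 < \<eta>"
  defines "\<rho> \<equiv> spa_rho \<alpha> \<beta> kv yv f"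
    and "f' \<equiv> f + (spa_tau \<alpha> \<beta> \<eta> kv yv f True * yv) *\<^sub>R kv"
  shows "hinge kv yv f - hinge kv yv fs + (\<rho> * (norm (f' - fs))\<^sup>2 + (1 - \<rho>) * (norm (f - fs))\<^sup>2) / (2 * \<eta>)
           \<le> (norm (f - fs))\<^sup>2 / (2 * \<eta>) + spa_round_bound \<alpha> \<beta> \<eta>"
proof -
  define l where "l = hinge kv yv f"
  define \<tau> where "\<tau> = spa_tau \<alpha> \<beta> \<eta> kv yv f True"
  have \<rho>: "\<rho> = min \<alpha> l / \<beta>" by (simp add: \<rho>_def l_def spa_rho_def)
  have bound_nonneg: "0 \<le> spa_round_bound \<alpha> \<beta> \<eta>"
    using assms by (simp add: spa_round_bound_def le_max_iff_disj)
  have mix: "(\<rho> * (norm (f' - fs))\<^sup>2 + (1 - \<rho>) * (norm (f - fs))\<^sup>2) / (2 * \<eta>)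
      = (norm (f - fs))\<^sup>2 / (2 * \<eta>) - \<rho> * ((norm (f - fs))\<^sup>2 - (norm (f' - fs))\<^sup>2) / (2 * \<eta>)"
    using \<open>0 < \<eta>\<close> by (simp add: field_simps)
  show ?thesis
  proof (cases "l = 0")
    case True
    then show ?thesis using \<rho> bound_nonneg assms by (simp add: l_def hinge_def)
  next
    case False
    then have "0 < l" by (simp add: l_def hinge_def)
    then have "0 < \<rho>" using \<rho> assms by simp
    have \<tau>: "\<tau> = min (\<eta> / \<rho>) l" by (simp add: \<tau>_def spa_tau_def kv \<rho>_def l_def)
    then have "0 \<le> \<tau>" using \<open>0 < \<rho>\<close> \<open>0 < l\<close> \<open>0 < \<eta>\<close> by simp
    have "l - hinge kv yv fs \<le> \<rho> * ((norm (f - fs))\<^sup>2 - (norm (f' - fs))\<^sup>2) / (2 * \<eta>) + min l (\<eta> / (2 * \<rho>))"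
      using norm_pa_update_le[OF kv yv \<open>0 \<le> \<tau>\<close>, of f fs] \<open>0 < l\<close>
      by (intro pa_step_gain_le[OF \<open>0 < l\<close> _ \<open>0 < \<rho>\<close> \<open>0 < \<eta>\<close> \<tau>])
        (simp_all add: l_def f'_def \<tau>_def hinge_def)
    moreover have "min l (\<eta> / (2 * \<rho>)) \<le> spa_round_bound \<alpha> \<beta> \<eta>"
      unfolding \<rho> using min_loss_step_le_spa_round_bound \<open>0 < l\<close> assms by blast
    ultimately show ?thesis using mix by (simp add: l_def)
  qed
qed

lemma finite_set_pmf_spa_Z: "finite (set_pmf (spa_Z \<alpha> \<beta> \<eta> kx y n))"
  by (induction n) (auto simp: finite_subset[of _ UNIV])

lemma spa_f_cong:
  "(\<And>i. i < t \<Longrightarrow> z i = z' i) \<Longrightarrow> spa_f \<alpha> \<beta> \<eta> kx y z t = spa_f \<alpha> \<beta> \<eta> kx y z' t"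
  by (induction t) (simp_all add: Let_def)

lemma spa_f_fun_upd_eq:
  "t \<le> n \<Longrightarrow> spa_f \<alpha> \<beta> \<eta> kx y (z(n := b)) t = spa_f \<alpha> \<beta> \<eta> kx y z t"
  by (rule spa_f_cong) simp

lemma spa_f_Suc_upd:
  "spa_f \<alpha> \<beta> \<eta> kx y (z(n := b)) (Suc n)
     = spa_f \<alpha> \<beta> \<eta> kx y z n + (spa_tau \<alpha> \<beta> \<eta> (kx n) (y n) (spa_f \<alpha> \<beta> \<eta> kx y z n) b * y n) *\<^sub>R kx n"
  by (simp add: spa_f_fun_upd_eq Let_def)

lemma spa_regret_Suc_upd:
  "spa_regret \<alpha> \<beta> \<eta> kx y fs (Suc n) (z(n := b))
     = spa_regret \<alpha> \<beta> \<eta> kx y fs n z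
       + (hinge (kx n) (y n) (spa_f \<alpha> \<beta> \<eta> kx y z n) - hinge (kx n) (y n) fs)"
  unfolding spa_regret_def by (simp add: spa_f_fun_upd_eq)

lemma expectation_spa_round_le:
  fixes kx :: "nat \<Rightarrow> 'h::real_inner"
  assumes "kx n \<bullet> kx n = 1" "y n \<in> {-1, 1}" "0 < \<alpha>" "\<alpha> \<le> \<beta>" "0 < \<eta>"
  shows "measure_pmf.expectation
           (map_pmf (\<lambda>b. z(n := b)) (bernoulli_pmf (spa_rho \<alpha> \<beta> (kx n) (y n) (spa_f \<alpha> \<beta> \<eta> kx y z n))))
           (spa_potential \<alpha> \<beta> \<eta> kx y fs (Suc n))
         \<le> spa_potential \<alpha> \<beta> \<eta> kx y fs n z + spa_round_bound \<alpha> \<beta> \<eta>"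
proof -
  define f where "f = spa_f \<alpha> \<beta> \<eta> kx y z n"
  define \<rho> where "\<rho> = spa_rho \<alpha> \<beta> (kx n) (y n) f"
  define f' where "f' = f + (spa_tau \<alpha> \<beta> \<eta> (kx n) (y n) f True * y n) *\<^sub>R kx n"
  have "0 \<le> \<rho>" "\<rho> \<le> 1" using spa_rho_bounds assms by (simp_all add: \<rho>_def)
  then have "measure_pmf.expectation (map_pmf (\<lambda>b. z(n := b)) (bernoulli_pmf \<rho>))
           (spa_potential \<alpha> \<beta> \<eta> kx y fs (Suc n))
      = spa_regret \<alpha> \<beta> \<eta> kx y fs n z
        + (hinge (kx n) (y n) f - hinge (kx n) (y n) fs
           + (\<rho> * (norm (f' - fs))\<^sup>2 + (1 - \<rho>) * (norm (f - fs))\<^sup>2) / (2 * \<eta>))"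
    using \<open>0 < \<eta>\<close>
    by (simp add: spa_potential_def spa_regret_Suc_upd spa_f_Suc_upd spa_tau_def f_def f'_def field_simps
        del: spa_f.simps)
  also have "\<dots> \<le> spa_regret \<alpha> \<beta> \<eta> kx y fs n z + ((norm (f - fs))\<^sup>2 / (2 * \<eta>) + spa_round_bound \<alpha> \<beta> \<eta>)"
    unfolding \<rho>_def f'_def using spa_round_potential_le assms by (intro add_left_mono) blast
  finally show ?thesis by (simp add: spa_potential_def \<rho>_def f_def)
qed

lemma spa_Z_Suc_map:
  "spa_Z \<alpha> \<beta> \<eta> kx y (Suc n) = bind_pmf (spa_Z \<alpha> \<beta> \<eta> kx y n) (\<lambda>z.
     map_pmf (\<lambda>b. z(n := b)) (bernoulli_pmf (spa_rho \<alpha> \<beta> (kx n) (y n) (spa_f \<alpha> \<beta> \<eta> kx y z n))))"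
  by (simp add: map_pmf_def)

lemma spa_expected_potential_le:
  fixes kx :: "nat \<Rightarrow> 'h::real_inner" and fs :: 'h
  assumes "\<forall>t<n. kx t \<bullet> kx t = 1" "\<forall>t<n. y t \<in> {-1, 1}" "0 < \<alpha>" "\<alpha> \<le> \<beta>" "0 < \<eta>"
  shows "measure_pmf.expectation (spa_Z \<alpha> \<beta> \<eta> kx y n) (spa_potential \<alpha> \<beta> \<eta> kx y fs n)
         \<le> (norm fs)\<^sup>2 / (2 * \<eta>) + real n * spa_round_bound \<alpha> \<beta> \<eta>"
  using assms(1,2)
proof (induction n)
  case 0
  then show ?case by (simp add: spa_potential_def spa_regret_def)
next
  case (Suc n)
  then have unit: "kx n \<bullet> kx n = 1" and label: "y n \<in> {-1, 1}" by simp_all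
  have finite_extension: "finite (set_pmf (map_pmf (\<lambda>b. z(n := b)) (bernoulli_pmf r)))" for z r
    by (simp only: set_map_pmf finite_imageI finite_class.finite)
  have "measure_pmf.expectation (spa_Z \<alpha> \<beta> \<eta> kx y (Suc n)) (spa_potential \<alpha> \<beta> \<eta> kx y fs (Suc n))
     \<le> measure_pmf.expectation (spa_Z \<alpha> \<beta> \<eta> kx y n) (spa_potential \<alpha> \<beta> \<eta> kx y fs n)
       + spa_round_bound \<alpha> \<beta> \<eta>"
    unfolding spa_Z_Suc_map by (rule expectation_bind_pmf_le)
      (simp_all only: finite_set_pmf_spa_Z finite_extension
        expectation_spa_round_le[where kx = kx and y = y and n = n, OF unit label assms(3-5)])
  also have "\<dots> \<le> (norm fs)\<^sup>2 / (2 * \<eta>) + real n * spa_round_bound \<alpha> \<beta> \<eta> + spa_round_bound \<alpha> \<beta> \<eta>"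
    using Suc.prems by (intro add_right_mono Suc.IH) auto
  finally show ?case by (simp add: algebra_simps)
qed

lemma spa_expected_regret_le:
  fixes kx :: "nat \<Rightarrow> 'h::real_inner" and fs :: 'h
  assumes "\<forall>t<n. kx t \<bullet> kx t = 1" "\<forall>t<n. y t \<in> {-1, 1}" "0 < \<alpha>" "\<alpha> \<le> \<beta>" "0 < \<eta>"
  shows "measure_pmf.expectation (spa_Z \<alpha> \<beta> \<eta> kx y n) (spa_regret \<alpha> \<beta> \<eta> kx y fs n)
         \<le> (norm fs)\<^sup>2 / (2 * \<eta>) + real n * spa_round_bound \<alpha> \<beta> \<eta>"
proof -
  have "measure_pmf.expectation (spa_Z \<alpha> \<beta> \<eta> kx y n) (spa_regret \<alpha> \<beta> \<eta> kx y fs n)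
     \<le> measure_pmf.expectation (spa_Z \<alpha> \<beta> \<eta> kx y n) (spa_potential \<alpha> \<beta> \<eta> kx y fs n)"
    using \<open>0 < \<eta>\<close> finite_set_pmf_spa_Z
    by (intro integral_mono integrable_measure_pmf_finite) (auto simp: spa_potential_def)
  also have "\<dots> \<le> (norm fs)\<^sup>2 / (2 * \<eta>) + real n * spa_round_bound \<alpha> \<beta> \<eta>"
    by (rule spa_expected_potential_le[OF assms])
  finally show ?thesis .
qed

lemma spa_round_bound_less:
  assumes "0 < \<alpha>" "\<alpha> \<le> \<beta>" "0 < \<eta>"
  shows "spa_round_bound \<alpha> \<beta> \<eta> < \<eta> * \<beta> / min \<alpha> (sqrt (\<beta> * \<eta>))"
proof -
  define m where "m = min \<alpha> (sqrt (\<beta> * \<eta>))"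
  have "0 < \<beta>" "0 < m" using assms by (auto simp: m_def)
  have "sqrt (\<beta> * \<eta>) * m \<le> sqrt (\<beta> * \<eta>) * sqrt (\<beta> * \<eta>)"
    using \<open>0 < \<beta>\<close> assms by (intro mult_left_mono) (auto simp: m_def)
  then have "sqrt (\<beta> * \<eta>) \<le> \<eta> * \<beta> / m"
    using \<open>0 < \<beta>\<close> \<open>0 < m\<close> assms by (simp add: field_simps)
  moreover have "sqrt (\<eta> * \<beta> / 2) < sqrt (\<beta> * \<eta>)"
    using \<open>0 < \<beta>\<close> assms by (simp add: mult.commute)
  moreover have "\<eta> * \<beta> / (2 * \<alpha>) < \<eta> * \<beta> / \<alpha>"
    using \<open>0 < \<beta>\<close> assms by (simp add: field_simps)
  moreover have "\<eta> * \<beta> / \<alpha> \<le> \<eta> * \<beta> / m"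
    using \<open>0 < \<beta>\<close> \<open>0 < m\<close> assms by (intro divide_left_mono) (auto simp: m_def)
  ultimately show ?thesis
    unfolding spa_round_bound_def m_def[symmetric] max_less_iff_conj by (meson less_le_trans)
qed

lemma spa_tuned_bound_eq:
  fixes F :: real
  assumes "0 < \<alpha>" "\<alpha> \<le> \<beta>" "0 < T" "0 < \<eta>"
    and \<eta>: "\<eta> = F * sqrt (\<alpha> / (2 * \<beta> * T))"
    and small_\<alpha>: "\<alpha> ^ 3 \<le> \<beta> / (2 * T) * F\<^sup>2"
  shows "F\<^sup>2 / (2 * \<eta>) + \<eta> * \<beta> / min \<alpha> (sqrt (\<beta> * \<eta>)) * T = F * sqrt (2 * \<beta> * T / \<alpha>)"
proof -
  define q where "q = sqrt (\<alpha> / (2 * \<beta> * T))"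
  have "0 < \<beta>" using assms by simp
  then have "0 < q" and q2: "q\<^sup>2 = \<alpha> / (2 * \<beta> * T)" using assms by (simp_all add: q_def)
  have "\<eta> = F * q" using \<eta> by (simp add: q_def)
  then have "0 < F" using \<open>0 < \<eta>\<close> \<open>0 < q\<close> by (simp add: zero_less_mult_iff)
  have "\<alpha> * \<alpha> ^ 3 \<le> \<alpha> * (\<beta> / (2 * T) * F\<^sup>2)"
    using small_\<alpha> assms by (intro mult_left_mono) auto
  also have "\<alpha> * (\<beta> / (2 * T) * F\<^sup>2) = (\<beta> * \<eta>)\<^sup>2"
    using q2 \<open>\<eta> = F * q\<close> \<open>0 < \<beta>\<close> assms by (simp add: field_simps power2_eq_square)
  finally have sq: "(\<alpha>\<^sup>2)\<^sup>2 \<le> (\<beta> * \<eta>)\<^sup>2" by (simp add: power2_eq_square power3_eq_cube algebra_simps)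
  have "\<alpha>\<^sup>2 \<le> \<beta> * \<eta>" using \<open>0 < \<beta>\<close> \<open>0 < \<eta>\<close> by (intro power2_le_imp_le[OF sq]) simp
  then have "\<alpha> \<le> sqrt (\<beta> * \<eta>)" by (rule real_le_rsqrt)
  then have min_eq: "min \<alpha> (sqrt (\<beta> * \<eta>)) = \<alpha>" by simp
  have sqrt_eq: "sqrt (2 * \<beta> * T / \<alpha>) = 1 / q"
    using assms \<open>0 < \<beta>\<close> by (simp add: q_def real_sqrt_divide)
  have rate_eq: "\<eta> * \<beta> / \<alpha> * T = F / (2 * q)"
  proof -
    have "\<alpha> = 2 * \<beta> * T * q\<^sup>2" using q2 \<open>0 < \<beta>\<close> \<open>0 < T\<close> by (simp add: field_simps)
    then show ?thesis
      using \<open>\<eta> = F * q\<close> \<open>0 < q\<close> \<open>0 < \<beta>\<close> \<open>0 < T\<close> by (simp add: field_simps power2_eq_square)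
  qed
  have init_eq: "F\<^sup>2 / (2 * \<eta>) = F / (2 * q)"
    using \<open>\<eta> = F * q\<close> \<open>0 < q\<close> \<open>0 < F\<close> by (simp add: field_simps power2_eq_square)
  have "F\<^sup>2 / (2 * \<eta>) + \<eta> * \<beta> / min \<alpha> (sqrt (\<beta> * \<eta>)) * T = F / (2 * q) + F / (2 * q)"
    unfolding min_eq rate_eq init_eq ..
  also have "\<dots> = F * sqrt (2 * \<beta> * T / \<alpha>)"
    unfolding sqrt_eq by simp
  finally show ?thesis .
qed

theorem lemma1:
  fixes \<kappa> :: "real^'d \<Rightarrow> real^'d \<Rightarrow> real"
    and k :: "real^'d \<Rightarrow> 'h::{real_inner,complete_space}"
    and x :: "nat \<Rightarrow> real^'d" and y :: "nat \<Rightarrow> real"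
    and T :: nat and \<alpha> \<beta> \<eta> :: real and fstar :: 'h
  assumes rkhs_dense: "closure (span (range k)) = UNIV"
    and kernel: "\<forall>u v. \<kappa> u v = k u \<bullet> k v"
    and diag: "\<forall>u. \<kappa> u u = 1"
    and T_pos: "T \<ge> 1"
    and labels: "\<forall>t<T. y t \<in> {-1, 1}"
    and lipschitz: "\<forall>t<T. \<forall>f g. \<bar>hinge (k (x t)) (y t) f - hinge (k (x t)) (y t) g\<bar> \<le> norm (f - g)"
    and fstar_min: "\<forall>f. (\<Sum>t<T. hinge (k (x t)) (y t) fstar) \<le> (\<Sum>t<T. hinge (k (x t)) (y t) f)"
    and alpha_pos: "0 < \<alpha>" and alpha_le_beta: "\<alpha> \<le> \<beta>" and eta_pos: "0 < \<eta>"
  shows "measure_pmf.expectation (spa_Z \<alpha> \<beta> \<eta> (\<lambda>t. k (x t)) y T)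
            (\<lambda>z. \<Sum>t<T. hinge (k (x t)) (y t) (spa_f \<alpha> \<beta> \<eta> (\<lambda>t. k (x t)) y z t)
                          - hinge (k (x t)) (y t) fstar)
          < 1 / (2 * \<eta>) * (norm fstar)\<^sup>2 + \<eta> * \<beta> / min \<alpha> (sqrt (\<beta> * \<eta>)) * real T
       \<and> ((\<eta> = norm fstar * sqrt (\<alpha> / (2 * \<beta> * real T))
            \<and> \<alpha> ^ 3 \<le> \<beta> / (2 * real T) * (norm fstar)\<^sup>2)
          \<longrightarrow> measure_pmf.expectation (spa_Z \<alpha> \<beta> \<eta> (\<lambda>t. k (x t)) y T)
                (\<lambda>z. \<Sum>t<T. hinge (k (x t)) (y t) (spa_f \<alpha> \<beta> \<eta> (\<lambda>t. k (x t)) y z t)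
                              - hinge (k (x t)) (y t) fstar)
              < norm fstar * sqrt (2 * \<beta> * real T / \<alpha>))"
proof -
  let ?E = "measure_pmf.expectation (spa_Z \<alpha> \<beta> \<eta> (\<lambda>t. k (x t)) y T)
             (spa_regret \<alpha> \<beta> \<eta> (\<lambda>t. k (x t)) y fstar T)"
  have "\<forall>t<T. k (x t) \<bullet> k (x t) = 1" using kernel diag by metis
  then have "?E \<le> (norm fstar)\<^sup>2 / (2 * \<eta>) + real T * spa_round_bound \<alpha> \<beta> \<eta>"
    by (rule spa_expected_regret_le[OF _ labels alpha_pos alpha_le_beta eta_pos])
  also have "\<dots> < (norm fstar)\<^sup>2 / (2 * \<eta>) + real T * (\<eta> * \<beta> / min \<alpha> (sqrt (\<beta> * \<eta>)))"
    using spa_round_bound_less[OF alpha_pos alpha_le_beta eta_pos] T_pos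
    by (intro add_strict_left_mono mult_strict_left_mono) auto
  finally have bound: "?E < 1 / (2 * \<eta>) * (norm fstar)\<^sup>2 + \<eta> * \<beta> / min \<alpha> (sqrt (\<beta> * \<eta>)) * real T"
    by (simp add: mult.commute)
  moreover have "?E < norm fstar * sqrt (2 * \<beta> * real T / \<alpha>)"
    if "\<eta> = norm fstar * sqrt (\<alpha> / (2 * \<beta> * real T))" "\<alpha> ^ 3 \<le> \<beta> / (2 * real T) * (norm fstar)\<^sup>2"
    using bound spa_tuned_bound_eq[OF alpha_pos alpha_le_beta _ eta_pos that] T_pos by simp
  ultimately show ?thesis unfolding spa_regret_def by blast
qed

end
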